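(* Let $\mathcal P\subset\mathbb R^d$ be compact, $\{p_i\}_{i=1}^K\subset\mathcal P$ anchors with fill distance $h_K:=\sup_{p\in\mathcal P}\min_i\|p-p_i\|$, and $i(p)\in\arg\min_i\|p-p_i\|$. Fix $(z,t)$. Assume: (i) there is $L<\infty$ with $\|f^\star(z',p,t')-f^\star(z',p',t')\|\le L\|p-p'\|$ for all $z',t'$ and $p,p'\in\mathcal P$; (ii) $\hat f(z,p,t)=\hat f(z,p_{i(p)},t)$ for all $p\in\mathcal P$; (iii) for each anchor we observe $y_{ij}=f^\star(z,p_i,t)+\varepsilon_{ij}$, $j=1,\dots,n_i$, with $\varepsilon_{ij}\in\mathbb R^m$ independent, mean-zero, and coordinate-wise $\sigma_i$-sub-Gaussian, and $\hat f(z,p_i,t)=\frac1{n_i}\sum_j y_{ij}$. Let $n_{\min}=\min_i n_i$ and $\sigma_{\max}=\max_i\sigma_i$. Then for any $\delta\in(0,1)$, with probability at least $1-\delta$, $$\sup_{p\in\mathcal P}\|\hat f(z,p,t)-f^\star(z,p,t)\|_2\le\sigma_{\max}\sqrt{\frac{2m\log(2mK/\delta)}{n_{\min}}}+Lh_K.$$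
   Context: A real random variable $X$ is $\sigma$-sub-Gaussian if $\mathbb E[e^{\lambda X}]\le e^{\sigma^2\lambda^2/2}$ for all $\lambda\in\mathbb R$. In (i) the norm on the left is the Euclidean norm on $\mathbb R^m$. *)

theory Defs
  imports "HOL-Probability.Probability"
begin

definition sub_gaussian :: "'w measure \<Rightarrow> real \<Rightarrow> ('w \<Rightarrow> real) \<Rightarrow> bool" where
  "sub_gaussian M \<sigma> X \<longleftrightarrow>
     (\<forall>l::real. (\<integral>\<^sup>+ \<omega>. ennreal (exp (l * X \<omega>)) \<partial>M) \<le> ennreal (exp (\<sigma>\<^sup>2 * l\<^sup>2 / 2)))"

definition fill_distance :: "'a::metric_space set \<Rightarrow> nat \<Rightarrow> (nat \<Rightarrow> 'a) \<Rightarrow> real" where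
  "fill_distance P K pa = (SUP p\<in>P. Min ((\<lambda>i. dist p (pa i)) ` {..<K}))"

end

(* At an anchor p_i the estimation error is the empirical mean of the n_i noise vectors.
   Each coordinate of that mean is a normalised sum of independent sigma_max-sub-Gaussian
   variables, so by the Chernoff bound it exceeds sigma_max sqrt (2 log (2mK/delta) / n_min)
   with probability at most delta/(mK); a union bound over the mK pairs (anchor, coordinate)
   controls all of them at once, and passing to the Euclidean norm costs a factor sqrt m.
   Away from the anchors fhat is constant on the cell of the nearest anchor p_i(p), so the
   Lipschitz bound on fstar adds L dist (p, p_i(p)) <= L h_K. *)

theory Submission
  imports Defs
begin

lemma sub_gaussian_mono:
  assumes "sub_gaussian M \<sigma> X" "\<bar>\<sigma>\<bar> \<le> \<bar>s\<bar>"
  shows "sub_gaussian M s X"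
  unfolding sub_gaussian_def
proof
  fix l :: real
  have "\<sigma>\<^sup>2 \<le> s\<^sup>2"
    using assms(2) by (simp add: abs_le_square_iff)
  then have "ennreal (exp (\<sigma>\<^sup>2 * l\<^sup>2 / 2)) \<le> ennreal (exp (s\<^sup>2 * l\<^sup>2 / 2))"
    by (intro ennreal_leI) (simp add: divide_right_mono mult_right_mono)
  then show "(\<integral>\<^sup>+ x. ennreal (exp (l * X x)) \<partial>M) \<le> ennreal (exp (s\<^sup>2 * l\<^sup>2 / 2))"
    using assms(1) unfolding sub_gaussian_def by (meson order_trans)
qed

lemma sub_gaussian_uminus:
  assumes "sub_gaussian M \<sigma> X"
  shows "sub_gaussian M \<sigma> (\<lambda>x. - X x)"
  unfolding sub_gaussian_def
proof
  fix l :: real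
  show "(\<integral>\<^sup>+ x. ennreal (exp (l * - X x)) \<partial>M) \<le> ennreal (exp (\<sigma>\<^sup>2 * l\<^sup>2 / 2))"
    using assms[unfolded sub_gaussian_def, rule_format, of "- l"] by simp
qed

lemma (in prob_space) sub_gaussian_0_AE_eq_0:
  assumes X: "X \<in> borel_measurable M" and "sub_gaussian M 0 X"
  shows "AE x in M. X x = 0"
proof -
  \<comment> \<open>E cosh X \<le> 1 by the bounds at l = 1 and l = -1, while cosh \<ge> 1 with equality only at 0.\<close>
  define g where "g x = ennreal (cosh (X x) - 1)" for x
  have [measurable]: "g \<in> borel_measurable M"
    unfolding g_def
    by (intro measurable_compose[OF _ measurable_ennreal] borel_measurable_diff measurable_compose[OF X]
        borel_measurable_continuous_onI continuous_on_cosh continuous_on_id) simp_all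
  have "(\<integral>\<^sup>+x. ennreal (exp (X x)) \<partial>M) \<le> 1" "(\<integral>\<^sup>+x. ennreal (exp (- X x)) \<partial>M) \<le> 1"
    using assms(2) unfolding sub_gaussian_def
    by (auto dest: spec[of _ 1] spec[of _ "-1"])
  then have "(\<integral>\<^sup>+x. ennreal (exp (X x)) + ennreal (exp (- X x)) \<partial>M) \<le> 2"
    using X by (subst nn_integral_add) (auto intro: order_trans[OF add_mono] simp: one_add_one)
  also have "(\<integral>\<^sup>+x. ennreal (exp (X x)) + ennreal (exp (- X x)) \<partial>M) = (\<integral>\<^sup>+x. 2 * g x + 2 \<partial>M)"
  proof (intro nn_integral_cong)
    fix x
    have "exp (X x) + exp (- X x) = 2 * (cosh (X x) - 1) + 2"
      by (simp add: cosh_field_def)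
    then have "ennreal (exp (X x)) + ennreal (exp (- X x)) = ennreal (2 * (cosh (X x) - 1) + 2)"
      by (simp flip: ennreal_plus)
    also have "\<dots> = ennreal (2 * (cosh (X x) - 1)) + ennreal 2"
      using cosh_real_ge_1[of "X x"] by (intro ennreal_plus) auto
    also have "\<dots> = 2 * g x + 2"
      unfolding g_def by (simp only: ennreal_mult'[of 2] ennreal_numeral zero_le_numeral)
    finally show "ennreal (exp (X x)) + ennreal (exp (- X x)) = 2 * g x + 2" .
  qed
  also have "\<dots> = 2 * (\<integral>\<^sup>+x. g x \<partial>M) + 2"
    by (simp add: nn_integral_add nn_integral_cmult emeasure_space_1)
  finally have "(\<integral>\<^sup>+x. g x \<partial>M) = 0"
    using ennreal_add_left_cancel_le[of 2 "2 * (\<integral>\<^sup>+x. g x \<partial>M)" 0] by (simp add: add.commute)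
  then have "AE x in M. g x = 0"
    by (simp add: nn_integral_0_iff_AE)
  moreover have "X x = 0" if "g x = 0" for x
  proof -
    have "cosh (X x) = 1"
      using that cosh_real_ge_1[of "X x"] by (simp add: g_def)
    then show ?thesis by simp
  qed
  ultimately show ?thesis
    by (auto elim: AE_mp)
qed

lemma (in prob_space) sub_gaussian_sum_Chernoff:
  fixes X :: "'i \<Rightarrow> 'a \<Rightarrow> real"
  assumes fin: "finite I" and ind: "indep_vars (\<lambda>_. borel) X I"
    and sg: "\<And>i. i \<in> I \<Longrightarrow> sub_gaussian M s (X i)" and l: "l > 0"
  shows "prob {x\<in>space M. (\<Sum>i\<in>I. X i x) \<ge> b} \<le> exp (- l * b + real (card I) * s\<^sup>2 * l\<^sup>2 / 2)"
proof -
  have [measurable]: "X i \<in> borel_measurable M" if "i \<in> I" for i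
    using ind that unfolding indep_vars_def by blast
  have "ennreal (prob {x\<in>space M. (\<Sum>i\<in>I. X i x) \<ge> b}) = emeasure M {x\<in>space M. (\<Sum>i\<in>I. X i x) \<ge> b}"
    by (simp add: emeasure_eq_measure)
  also have "\<dots> \<le> ennreal (exp (- l * b)) * (\<integral>\<^sup>+x. ennreal (exp (l * (\<Sum>i\<in>I. X i x))) * indicator (space M) x \<partial>M)"
    by (intro Chernoff_ineq_nn_integral_ge l) auto
  also have "(\<integral>\<^sup>+x. ennreal (exp (l * (\<Sum>i\<in>I. X i x))) * indicator (space M) x \<partial>M) =
             (\<integral>\<^sup>+x. (\<Prod>i\<in>I. ennreal (exp (l * X i x))) \<partial>M)"
    by (intro nn_integral_cong) (simp add: sum_distrib_left exp_sum fin prod_ennreal)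
  also have "\<dots> = (\<Prod>i\<in>I. \<integral>\<^sup>+x. ennreal (exp (l * X i x)) \<partial>M)"
    by (intro indep_vars_nn_integral fin indep_vars_compose2[OF ind]) auto
  also have "ennreal (exp (- l * b)) * \<dots> \<le> ennreal (exp (- l * b)) * (\<Prod>i\<in>I. ennreal (exp (s\<^sup>2 * l\<^sup>2 / 2)))"
    using sg unfolding sub_gaussian_def by (intro mult_left_mono prod_mono_ennreal) auto
  also have "\<dots> = ennreal (exp (- l * b + real (card I) * s\<^sup>2 * l\<^sup>2 / 2))"
  proof -
    have "(\<Prod>i\<in>I. ennreal (exp (s\<^sup>2 * l\<^sup>2 / 2))) = ennreal (exp (real (card I) * s\<^sup>2 * l\<^sup>2 / 2))"
      by (simp add: ennreal_power exp_of_nat_mult[symmetric] mult.assoc)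
    then show ?thesis
      by (simp flip: ennreal_mult' exp_add)
  qed
  finally show ?thesis
    by (simp add: ennreal_le_iff)
qed

lemma (in prob_space) sub_gaussian_sum_tail:
  fixes X :: "'i \<Rightarrow> 'a \<Rightarrow> real"
  assumes fin: "finite I" and ind: "indep_vars (\<lambda>_. borel) X I"
    and sg: "\<And>i. i \<in> I \<Longrightarrow> sub_gaussian M s (X i)" and "s \<ge> 0" "t \<ge> 0"
  shows "prob {x\<in>space M. (\<Sum>i\<in>I. X i x) > s * sqrt (2 * real (card I) * t)} \<le> exp (- t)"
proof -
  have [measurable]: "X i \<in> borel_measurable M" if "i \<in> I" for i
    using ind that unfolding indep_vars_def by blast
  define N where "N = real (card I)"
  define b where "b = s * sqrt (2 * N * t)"
  consider "s = 0" | "t = 0 \<or> I = {}" | "s > 0" "t > 0" "I \<noteq> {}"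
    using \<open>s \<ge> 0\<close> \<open>t \<ge> 0\<close> by force
  then show ?thesis
  proof cases
    case 1
    have "AE x in M. \<forall>i\<in>I. X i x = 0"
      using sg by (intro AE_finite_allI fin sub_gaussian_0_AE_eq_0) (auto simp: 1)
    then have "prob {x\<in>space M. (\<Sum>i\<in>I. X i x) > s * sqrt (2 * real (card I) * t)} = 0"
      by (intro prob_eq_0_AE) (auto simp: 1)
    then show ?thesis by simp
  next
    case 2
    then show ?thesis by auto
  next
    case 3
    then have N: "N > 0" using fin by (simp add: N_def card_gt_0_iff)
    define l where "l = b / (N * s\<^sup>2)"
    have "l > 0" using 3 N by (simp add: l_def b_def)
    have "prob {x\<in>space M. (\<Sum>i\<in>I. X i x) > b} \<le> prob {x\<in>space M. (\<Sum>i\<in>I. X i x) \<ge> b}"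
      by (intro finite_measure_mono) auto
    also have "\<dots> \<le> exp (- l * b + N * s\<^sup>2 * l\<^sup>2 / 2)"
      unfolding N_def by (rule sub_gaussian_sum_Chernoff[OF fin ind sg \<open>l > 0\<close>])
    also have "- l * b + N * s\<^sup>2 * l\<^sup>2 / 2 = - b\<^sup>2 / (2 * N * s\<^sup>2)"
      unfolding l_def using 3 N by (simp add: power2_eq_square field_simps)
    also have "\<dots> = - t"
      unfolding b_def using 3 N by (simp add: power_mult_distrib)
    finally show ?thesis by (simp add: b_def N_def)
  qed
qed

lemma (in prob_space) sub_gaussian_mean_abs_tail:
  fixes X :: "'i \<Rightarrow> 'a \<Rightarrow> real" and t :: real
  assumes fin: "finite I" and ind: "indep_vars (\<lambda>_. borel) X I"
    and sg: "\<And>i. i \<in> I \<Longrightarrow> sub_gaussian M s (X i)" and "s \<ge> 0" "t \<ge> 0"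
  shows "prob {x\<in>space M. \<bar>(\<Sum>i\<in>I. X i x) / card I\<bar> > s * sqrt (2 * t / card I)} \<le> 2 * exp (- t)"
proof (cases "I = {}")
  case True
  then show ?thesis by simp
next
  case False
  have [measurable]: "X i \<in> borel_measurable M" if "i \<in> I" for i
    using ind that unfolding indep_vars_def by blast
  define N where "N = real (card I)"
  have N: "N > 0"
    using False fin by (simp add: N_def card_gt_0_iff)
  define b where "b = s * sqrt (2 * N * t)"
  have Nb: "N * (s * sqrt (2 * t / N)) = b"
  proof -
    have "N * sqrt (2 * t / N) = sqrt N * sqrt N * sqrt (2 * t / N)"
      using N by simp
    also have "\<dots> = sqrt (N * N * (2 * t / N))"
      by (simp only: real_sqrt_mult)
    also have "\<dots> = sqrt (2 * N * t)"
      using N by simp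
    finally show ?thesis
      by (simp add: b_def)
  qed
  have "\<bar>y / N\<bar> > s * sqrt (2 * t / N) \<longleftrightarrow> y > b \<or> - y > b" for y
  proof -
    have "\<bar>y / N\<bar> > s * sqrt (2 * t / N) \<longleftrightarrow> \<bar>y\<bar> > N * (s * sqrt (2 * t / N))"
      using N by (simp add: pos_less_divide_eq mult.commute)
    then show ?thesis
      unfolding Nb by auto
  qed
  then have "{x\<in>space M. \<bar>(\<Sum>i\<in>I. X i x) / card I\<bar> > s * sqrt (2 * t / card I)} =
      {x\<in>space M. (\<Sum>i\<in>I. X i x) > b} \<union> {x\<in>space M. (\<Sum>i\<in>I. - X i x) > b}"
    by (auto simp: N_def sum_negf)
  also have "prob \<dots> \<le> prob {x\<in>space M. (\<Sum>i\<in>I. X i x) > b} + prob {x\<in>space M. (\<Sum>i\<in>I. - X i x) > b}"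
    by (intro measure_subadditive) auto
  also have "\<dots> \<le> exp (- t) + exp (- t)"
  proof (intro add_mono)
    show "prob {x\<in>space M. (\<Sum>i\<in>I. X i x) > b} \<le> exp (- t)"
      unfolding b_def N_def using sg assms(4,5) by (rule sub_gaussian_sum_tail[OF fin ind])
    have "indep_vars (\<lambda>_. borel) (\<lambda>i x. - X i x) I"
      by (intro indep_vars_compose2[OF ind]) simp
    then show "prob {x\<in>space M. (\<Sum>i\<in>I. - X i x) > b} \<le> exp (- t)"
      unfolding b_def N_def using sg assms(4,5)
      by (intro sub_gaussian_sum_tail[OF fin] sub_gaussian_uminus) auto
  qed
  finally show ?thesis
    by simp
qed

lemma (in prob_space) sub_gaussian_means_uniform_bound:
  fixes Y :: "'g \<Rightarrow> 'j \<Rightarrow> 'a \<Rightarrow> real" and \<delta> :: real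
  assumes G: "finite G" and J: "\<And>g. g \<in> G \<Longrightarrow> finite (J g)"
    and ind: "\<And>g. g \<in> G \<Longrightarrow> indep_vars (\<lambda>_. borel) (Y g) (J g)"
    and sg: "\<And>g j. g \<in> G \<Longrightarrow> j \<in> J g \<Longrightarrow> sub_gaussian M s (Y g j)"
    and s: "s \<ge> 0" and \<delta>: "0 < \<delta>" "\<delta> \<le> 2 * real (card G)"
  shows "\<exists>A\<in>events. prob A \<ge> 1 - \<delta> \<and> (\<forall>x\<in>A. \<forall>g\<in>G.
           \<bar>(\<Sum>j\<in>J g. Y g j x) / card (J g)\<bar> \<le> s * sqrt (2 * ln (2 * real (card G) / \<delta>) / card (J g)))"
proof -
  define t where "t = ln (2 * real (card G) / \<delta>)"
  have "real (card G) > 0"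
    using \<delta> by linarith
  have t: "t \<ge> 0"
    unfolding t_def using \<delta> by (intro ln_ge_zero) (simp add: le_divide_eq)
  define B where "B g = {x\<in>space M. \<bar>(\<Sum>j\<in>J g. Y g j x) / card (J g)\<bar> > s * sqrt (2 * t / card (J g))}" for g
  have B_events: "B g \<in> events" if "g \<in> G" for g
  proof -
    have [measurable]: "Y g j \<in> borel_measurable M" if "j \<in> J g" for j
      using ind[OF \<open>g \<in> G\<close>] that unfolding indep_vars_def by blast
    show ?thesis
      unfolding B_def by measurable
  qed
  have "exp (- t) = \<delta> / (2 * card G)"
    unfolding t_def using \<delta>(1) \<open>real (card G) > 0\<close> by (simp add: exp_minus)
  have "prob (\<Union>g\<in>G. B g) \<le> (\<Sum>g\<in>G. prob (B g))"
    using B_events G by (intro finite_measure_subadditive_finite) auto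
  also have "\<dots> \<le> (\<Sum>g\<in>G. 2 * exp (- t))"
    unfolding B_def using J ind sg s t by (intro sum_mono sub_gaussian_mean_abs_tail) auto
  also have "\<dots> = \<delta>"
    using \<open>exp (- t) = \<delta> / (2 * card G)\<close> \<open>real (card G) > 0\<close> by simp
  finally have "prob (\<Union>g\<in>G. B g) \<le> \<delta>" .
  moreover have "(\<Union>g\<in>G. B g) \<in> events"
    using B_events G by auto
  ultimately have "space M - (\<Union>g\<in>G. B g) \<in> events" "prob (space M - (\<Union>g\<in>G. B g)) \<ge> 1 - \<delta>"
    by (auto simp: prob_compl)
  moreover have "\<bar>(\<Sum>j\<in>J g. Y g j x) / card (J g)\<bar> \<le> s * sqrt (2 * t / card (J g))"
    if "x \<in> space M - (\<Union>g\<in>G. B g)" "g \<in> G" for x g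
    using that by (auto simp: B_def not_less)
  ultimately show ?thesis
    unfolding t_def by blast
qed

lemma norm_le_sqrt_CARD_mult:
  fixes v :: "real ^ 'n"
  assumes "\<And>k. \<bar>v $ k\<bar> \<le> r"
  shows "norm v \<le> sqrt CARD('n) * r"
proof -
  have "infnorm v \<le> r"
    unfolding infnorm_cart using assms by (intro cSup_least) auto
  then show ?thesis
    using norm_le_infnorm[of v] by (simp add: order_trans mult_left_mono)
qed

lemma (in prob_space) indep_vars_vec_nth_slice:
  fixes Y :: "'g \<Rightarrow> 'j \<Rightarrow> 'a \<Rightarrow> real ^ 'm"
  assumes "indep_vars (\<lambda>_. borel) (\<lambda>(g, j). Y g j) (SIGMA g:G. J g)" and "g \<in> G"
  shows "indep_vars (\<lambda>_. borel) (\<lambda>(g', j) x. Y g' j x $ k) (Pair g ` J g)"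
proof -
  have "indep_vars (\<lambda>_. borel) (\<lambda>(g', j) x. Y g' j x $ k) (SIGMA g:G. J g)"
    using indep_vars_compose2[OF assms(1), of "\<lambda>_ v. v $ k" "\<lambda>_. borel"] by (simp add: case_prod_unfold)
  then show ?thesis
    by (rule indep_vars_subset) (use \<open>g \<in> G\<close> in auto)
qed

lemma (in prob_space) sub_gaussian_vector_means_uniform_bound:
  fixes Y :: "'g \<Rightarrow> 'j \<Rightarrow> 'a \<Rightarrow> real ^ 'm" and \<delta> :: real
  assumes G: "finite G" and J: "\<And>g. g \<in> G \<Longrightarrow> finite (J g)"
    and ind: "indep_vars (\<lambda>_. borel) (\<lambda>(g, j). Y g j) (SIGMA g:G. J g)"
    and sg: "\<And>g j k. g \<in> G \<Longrightarrow> j \<in> J g \<Longrightarrow> sub_gaussian M s (\<lambda>x. Y g j x $ k)"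
    and s: "s \<ge> 0" and \<delta>: "0 < \<delta>" "\<delta> \<le> 2 * real CARD('m) * real (card G)"
  shows "\<exists>A\<in>events. prob A \<ge> 1 - \<delta> \<and> (\<forall>x\<in>A. \<forall>g\<in>G.
           norm ((1 / card (J g)) *\<^sub>R (\<Sum>j\<in>J g. Y g j x))
             \<le> sqrt CARD('m) * (s * sqrt (2 * ln (2 * real CARD('m) * real (card G) / \<delta>) / card (J g))))"
proof -
  define c where "c = 2 * real CARD('m) * real (card G) / \<delta>"
  let ?G = "G \<times> (UNIV :: 'm set)"
  let ?J = "\<lambda>(g, k :: 'm). Pair g ` J g"
  let ?Y = "\<lambda>(g, k :: 'm) (g', j) x. Y g' j x $ k"
  have card_G: "2 * real (card ?G) = 2 * real CARD('m) * real (card G)"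
    by (simp add: card_cartesian_product)
  have "\<delta> \<le> 2 * real (card ?G)"
    unfolding card_G by (rule \<delta>(2))
  then have "\<exists>A\<in>events. prob A \<ge> 1 - \<delta> \<and> (\<forall>x\<in>A. \<forall>gk\<in>?G.
      \<bar>(\<Sum>i\<in>?J gk. ?Y gk i x) / card (?J gk)\<bar> \<le> s * sqrt (2 * ln c / card (?J gk)))"
    unfolding c_def card_G[symmetric] using G J sg indep_vars_vec_nth_slice[OF ind]
    by (intro sub_gaussian_means_uniform_bound[OF _ _ _ _ s \<delta>(1)]) auto
  then obtain A where A: "A \<in> events" "prob A \<ge> 1 - \<delta>" and
    bound: "\<And>x g k. x \<in> A \<Longrightarrow> g \<in> G \<Longrightarrow>
      \<bar>(\<Sum>i\<in>Pair g ` J g. ?Y (g, k) i x) / card (Pair g ` J g)\<bar> \<le> s * sqrt (2 * ln c / card (Pair g ` J g))"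
    by fastforce
  have sum_J: "(\<Sum>i\<in>Pair g ` J g. ?Y (g, k) i x) = (\<Sum>j\<in>J g. Y g j x) $ k" for g k x
    by (simp add: sum.reindex inj_on_def sum_component)
  have card_J: "card (Pair g ` J g) = card (J g)" for g
    by (simp add: card_image inj_on_def)
  show ?thesis
    unfolding c_def[symmetric]
  proof (intro bexI[OF _ A(1)] conjI A(2) ballI norm_le_sqrt_CARD_mult)
    fix x g k
    assume "x \<in> A" "g \<in> G"
    show "\<bar>((1 / card (J g)) *\<^sub>R (\<Sum>j\<in>J g. Y g j x)) $ k\<bar> \<le> s * sqrt (2 * ln c / card (J g))"
      using bound[OF \<open>x \<in> A\<close> \<open>g \<in> G\<close>, of k]
      unfolding sum_J card_J by (simp add: divide_inverse mult.commute)
  qed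
qed

lemma (in prob_space) sub_gaussian_vector_means_Max_Min_bound:
  fixes eps :: "nat \<Rightarrow> nat \<Rightarrow> 'a \<Rightarrow> real ^ 'm" and \<delta> :: real
  assumes K: "K > 0" and n_pos: "\<forall>i<K. n i > 0" and \<sigma>_nonneg: "\<forall>i<K. \<sigma> i \<ge> 0"
    and ind: "indep_vars (\<lambda>_. borel) (\<lambda>(i, j). eps i j) {(i, j). i < K \<and> j < n i}"
    and sg: "\<forall>i<K. \<forall>j<n i. \<forall>k. sub_gaussian M (\<sigma> i) (\<lambda>x. eps i j x $ k)"
    and \<delta>: "0 < \<delta>" "\<delta> \<le> 1"
  shows "\<exists>A\<in>events. prob A \<ge> 1 - \<delta> \<and> (\<forall>x\<in>A. \<forall>i<K.
           norm ((1 / real (n i)) *\<^sub>R (\<Sum>j<n i. eps i j x))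
             \<le> Max (\<sigma> ` {..<K}) *
                 sqrt (2 * real CARD('m) * ln (2 * real CARD('m) * real K / \<delta>) / real (Min (n ` {..<K}))))"
proof -
  define s where "s = Max (\<sigma> ` {..<K})"
  define N where "N = Min (n ` {..<K})"
  define c where "c = 2 * real CARD('m) * real K / \<delta>"
  have \<sigma>_le_s: "\<sigma> i \<le> s" if "i < K" for i
    unfolding s_def using that by (intro Max_ge) auto
  then have "s \<ge> 0"
    using K \<sigma>_nonneg order_trans by blast
  have "N \<in> n ` {..<K}"
    unfolding N_def using K by (intro Min_in) auto
  then have "N > 0"
    using n_pos by blast
  have N_le: "N \<le> n i" if "i < K" for i
    unfolding N_def using that by (intro Min_le) auto
  have "1 \<le> real CARD('m) * real K"
    using K by (simp flip: of_nat_mult add: Suc_le_eq)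
  then have \<delta>_le: "\<delta> \<le> 2 * real CARD('m) * real K"
    using \<delta> by linarith
  then have "ln c \<ge> 0"
    unfolding c_def using \<delta> by (intro ln_ge_zero) (simp add: le_divide_eq)
  have "(SIGMA i:{..<K}. {..<n i}) = {(i, j). i < K \<and> j < n i}"
    by auto
  moreover have "sub_gaussian M s (\<lambda>x. eps i j x $ k)" if "i \<in> {..<K}" "j \<in> {..<n i}" for i j k
  proof (rule sub_gaussian_mono)
    show "sub_gaussian M (\<sigma> i) (\<lambda>x. eps i j x $ k)"
      using sg that by simp
    show "\<bar>\<sigma> i\<bar> \<le> \<bar>s\<bar>"
      using \<sigma>_nonneg \<sigma>_le_s \<open>s \<ge> 0\<close> that by simp
  qed
  ultimately obtain A where A: "A \<in> events" "prob A \<ge> 1 - \<delta>" and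
    bound: "\<And>x i. x \<in> A \<Longrightarrow> i \<in> {..<K} \<Longrightarrow> norm ((1 / card {..<n i}) *\<^sub>R (\<Sum>j\<in>{..<n i}. eps i j x))
      \<le> sqrt CARD('m) * (s * sqrt (2 * ln c / card {..<n i}))"
    using sub_gaussian_vector_means_uniform_bound[of "{..<K}" "\<lambda>i. {..<n i}" eps s \<delta>] ind \<open>s \<ge> 0\<close> \<delta>(1) \<delta>_le
    unfolding c_def by auto
  have "2 * real CARD('m) * ln c / N = CARD('m) * (2 * ln c / N)"
    by simp
  then have r_eq: "sqrt CARD('m) * (s * sqrt (2 * ln c / N)) = s * sqrt (2 * real CARD('m) * ln c / N)"
    by (simp only: real_sqrt_mult mult.left_commute)
  show ?thesis
    unfolding s_def[symmetric] N_def[symmetric] c_def[symmetric]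
  proof (intro bexI[OF _ A(1)] conjI A(2) ballI allI impI)
    fix x i
    assume "x \<in> A" "i < K"
    then have "norm ((1 / real (n i)) *\<^sub>R (\<Sum>j<n i. eps i j x)) \<le> sqrt CARD('m) * (s * sqrt (2 * ln c / n i))"
      using bound[of x i] by simp
    also have "\<dots> \<le> sqrt CARD('m) * (s * sqrt (2 * ln c / N))"
      using \<open>N > 0\<close> \<open>ln c \<ge> 0\<close> \<open>s \<ge> 0\<close> N_le[OF \<open>i < K\<close>]
      by (intro mult_left_mono real_sqrt_le_mono divide_left_mono) auto
    finally show "norm ((1 / real (n i)) *\<^sub>R (\<Sum>j<n i. eps i j x)) \<le> s * sqrt (2 * real CARD('m) * ln c / N)"
      unfolding r_eq .
  qed
qed

lemma average_add_const:
  fixes c :: "'a::real_vector"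
  assumes "n > 0"
  shows "(1 / real n) *\<^sub>R (\<Sum>j<n. c + e j) = c + (1 / real n) *\<^sub>R (\<Sum>j<n. e j)"
proof -
  have "(\<Sum>j<n. c + e j) = real n *\<^sub>R c + (\<Sum>j<n. e j)"
    by (simp only: sum.distrib sum_constant_scaleR card_lessThan)
  then show ?thesis
    using assms by (simp add: scaleR_add_right)
qed

lemma fill_distance_eq_SUP_nearest:
  assumes nearest: "\<And>p. p \<in> P \<Longrightarrow> idx p < K \<and> (\<forall>i<K. dist p (pa (idx p)) \<le> dist p (pa i))"
  shows "fill_distance P K pa = (SUP p\<in>P. dist p (pa (idx p)))"
  unfolding fill_distance_def using nearest by (intro SUP_cong refl Min_eqI) auto

lemma dist_nearest_le_fill_distance:
  assumes "bounded P" and anchors: "\<forall>i<K. pa i \<in> P"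
    and nearest: "\<And>p. p \<in> P \<Longrightarrow> idx p < K \<and> (\<forall>i<K. dist p (pa (idx p)) \<le> dist p (pa i))"
    and "p \<in> P"
  shows "dist p (pa (idx p)) \<le> fill_distance P K pa"
proof -
  have "bdd_above ((\<lambda>p. dist p (pa (idx p))) ` P)"
    using anchors nearest diameter_bounded_bound[OF \<open>bounded P\<close>] by (intro bdd_aboveI2) blast
  with \<open>p \<in> P\<close> have "dist p (pa (idx p)) \<le> (SUP p\<in>P. dist p (pa (idx p)))"
    by (rule cSUP_upper)
  then show ?thesis
    using fill_distance_eq_SUP_nearest[OF nearest] by simp
qed

lemma piecewise_constant_SUP_error_le:
  fixes f g :: "'a::metric_space \<Rightarrow> 'b::real_normed_vector"
  assumes "bounded P" "P \<noteq> {}" and anchors: "\<forall>i<K. pa i \<in> P"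
    and nearest: "\<And>p. p \<in> P \<Longrightarrow> idx p < K \<and> (\<forall>i<K. dist p (pa (idx p)) \<le> dist p (pa i))"
    and lipschitz: "\<And>p q. p \<in> P \<Longrightarrow> q \<in> P \<Longrightarrow> norm (g p - g q) \<le> L * dist p q"
    and piecewise_const: "\<And>p. p \<in> P \<Longrightarrow> f p = f (pa (idx p))"
    and anchor_error: "\<And>i. i < K \<Longrightarrow> norm (f (pa i) - g (pa i)) \<le> e"
  shows "(SUP p\<in>P. norm (f p - g p)) \<le> e + L * fill_distance P K pa"
proof (rule cSUP_least[OF \<open>P \<noteq> {}\<close>])
  fix p
  assume "p \<in> P"
  define q where "q = pa (idx p)"
  have "idx p < K" "q \<in> P"
    using nearest anchors \<open>p \<in> P\<close> by (auto simp: q_def)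
  have "L * dist q p \<le> L * fill_distance P K pa"
  proof (cases "L \<ge> 0")
    case True
    then show ?thesis
      using dist_nearest_le_fill_distance[OF \<open>bounded P\<close> anchors nearest \<open>p \<in> P\<close>]
      by (simp add: q_def dist_commute mult_left_mono)
  next
    case False
    \<comment> \<open>A negative Lipschitz constant forces P to be a single point.\<close>
    have nearest_0: "dist p' (pa (idx p')) = 0" if "p' \<in> P" for p'
    proof -
      have "0 \<le> L * dist p' (pa (idx p'))"
        using lipschitz[OF that, of "pa (idx p')"] nearest[OF that] anchors norm_ge_zero order_trans by blast
      then show ?thesis
        using False by (simp add: zero_le_mult_iff)
    qed
    have "(SUP p'\<in>P. dist p' (pa (idx p'))) = (SUP p'\<in>P. 0)"
      by (intro SUP_cong refl nearest_0)
    then have "fill_distance P K pa = 0"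
      using fill_distance_eq_SUP_nearest[OF nearest] \<open>P \<noteq> {}\<close> by simp
    then show ?thesis
      using nearest_0[OF \<open>p \<in> P\<close>] by (simp add: q_def dist_commute)
  qed
  have "norm (f p - g p) = norm ((f q - g q) + (g q - g p))"
    using piecewise_const \<open>p \<in> P\<close> by (simp add: q_def)
  also have "\<dots> \<le> norm (f q - g q) + norm (g q - g p)"
    by (rule norm_triangle_ineq)
  also have "\<dots> \<le> e + L * dist q p"
    using anchor_error[OF \<open>idx p < K\<close>] lipschitz[OF \<open>q \<in> P\<close> \<open>p \<in> P\<close>] by (simp add: q_def add_mono)
  also have "\<dots> \<le> e + L * fill_distance P K pa"
    using \<open>L * dist q p \<le> L * fill_distance P K pa\<close> by simp
  finally show "norm (f p - g p) \<le> e + L * fill_distance P K pa" .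
qed

theorem theoremA6:
  fixes M :: "'w measure"
    and P :: "(real ^ 'd) set"
    and K :: nat
    and pa :: "nat \<Rightarrow> real ^ 'd"
    and idx :: "real ^ 'd \<Rightarrow> nat"
    and fstar :: "'z \<Rightarrow> real ^ 'd \<Rightarrow> 't \<Rightarrow> real ^ 'm"
    and fhat :: "'w \<Rightarrow> 'z \<Rightarrow> real ^ 'd \<Rightarrow> 't \<Rightarrow> real ^ 'm"
    and z :: 'z and t :: 't
    and L :: real
    and n :: "nat \<Rightarrow> nat"
    and \<sigma> :: "nat \<Rightarrow> real"
    and eps :: "nat \<Rightarrow> nat \<Rightarrow> 'w \<Rightarrow> real ^ 'm"
    and \<delta> :: real
  assumes M: "prob_space M"
    and P_compact: "compact P"
    and K_pos: "K > 0"
    and anchors: "\<forall>i<K. pa i \<in> P"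
    and idx: "\<forall>p\<in>P. idx p < K \<and> (\<forall>i<K. dist p (pa (idx p)) \<le> dist p (pa i))"
    and lipschitz: "\<forall>z' t'. \<forall>p\<in>P. \<forall>p'\<in>P.
                       norm (fstar z' p t' - fstar z' p' t') \<le> L * dist p p'"
    and piecewise_const: "\<forall>\<omega>\<in>space M. \<forall>p\<in>P. fhat \<omega> z p t = fhat \<omega> z (pa (idx p)) t"
    and n_pos: "\<forall>i<K. n i > 0"
    and sigma_nonneg: "\<forall>i<K. \<sigma> i \<ge> 0"
    and indep: "prob_space.indep_vars M (\<lambda>_. borel) (\<lambda>(i, j). eps i j) {(i, j). i < K \<and> j < n i}"
    and mean_zero: "\<forall>i<K. \<forall>j<n i. integrable M (eps i j) \<and> prob_space.expectation M (eps i j) = 0"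
    and subg: "\<forall>i<K. \<forall>j<n i. \<forall>k. sub_gaussian M (\<sigma> i) (\<lambda>\<omega>. eps i j \<omega> $ k)"
    and estimator: "\<forall>\<omega>\<in>space M. \<forall>i<K.
         fhat \<omega> z (pa i) t = (1 / real (n i)) *\<^sub>R (\<Sum>j<n i. fstar z (pa i) t + eps i j \<omega>)"
    and delta: "0 < \<delta>" "\<delta> < 1"
  shows "\<exists>A\<in>prob_space.events M. prob_space.prob M A \<ge> 1 - \<delta> \<and>
           (\<forall>\<omega>\<in>A. (SUP p\<in>P. norm (fhat \<omega> z p t - fstar z p t))
              \<le> Max (\<sigma> ` {..<K}) *
                  sqrt (2 * real CARD('m) * ln (2 * real CARD('m) * real K / \<delta>)
                        / real (Min (n ` {..<K})))
                + L * fill_distance P K pa)"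
proof -
  interpret prob_space M by (rule M)
  let ?r = "Max (\<sigma> ` {..<K}) *
    sqrt (2 * real CARD('m) * ln (2 * real CARD('m) * real K / \<delta>) / real (Min (n ` {..<K})))"
  obtain A where A: "A \<in> events" "prob A \<ge> 1 - \<delta>" and
    noise: "\<And>\<omega> i. \<omega> \<in> A \<Longrightarrow> i < K \<Longrightarrow> norm ((1 / real (n i)) *\<^sub>R (\<Sum>j<n i. eps i j \<omega>)) \<le> ?r"
    using sub_gaussian_vector_means_Max_Min_bound[OF K_pos n_pos sigma_nonneg indep subg delta(1)] delta(2)
    by auto
  show ?thesis
  proof (intro bexI[OF _ A(1)] conjI A(2) ballI)
    fix \<omega>
    assume "\<omega> \<in> A"
    then have "\<omega> \<in> space M"
      using sets.sets_into_space[OF A(1)] by blast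
    show "(SUP p\<in>P. norm (fhat \<omega> z p t - fstar z p t)) \<le> ?r + L * fill_distance P K pa"
    proof (rule piecewise_constant_SUP_error_le[where f = "\<lambda>p. fhat \<omega> z p t" and g = "\<lambda>p. fstar z p t"])
      show "bounded P"
        using P_compact by (rule compact_imp_bounded)
      show "P \<noteq> {}"
        using anchors K_pos by blast
      show "\<forall>i<K. pa i \<in> P"
        by (rule anchors)
      show "idx p < K \<and> (\<forall>i<K. dist p (pa (idx p)) \<le> dist p (pa i))" if "p \<in> P" for p
        using idx that by blast
      show "norm (fstar z p t - fstar z q t) \<le> L * dist p q" if "p \<in> P" "q \<in> P" for p q
        using lipschitz that by blast
      show "fhat \<omega> z p t = fhat \<omega> z (pa (idx p)) t" if "p \<in> P" for p
        using piecewise_const \<open>\<omega> \<in> space M\<close> that by blast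
      show "norm (fhat \<omega> z (pa i) t - fstar z (pa i) t) \<le> ?r" if "i < K" for i
      proof -
        have "fhat \<omega> z (pa i) t = (1 / real (n i)) *\<^sub>R (\<Sum>j<n i. fstar z (pa i) t + eps i j \<omega>)"
          using estimator \<open>\<omega> \<in> space M\<close> that by blast
        also have "\<dots> = fstar z (pa i) t + (1 / real (n i)) *\<^sub>R (\<Sum>j<n i. eps i j \<omega>)"
          using n_pos that by (intro average_add_const) blast
        finally show ?thesis
          using noise[OF \<open>\<omega> \<in> A\<close> that] by simp
      qed
    qed
  qed
qed

end
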